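(* Let $I$ be a finite set and $\{V^{(\tau)}\}_{\tau\in I}$ a family of mixed $\mathbb{R}$-Hodge structures. Let $V=\bigotimes_{\tau\in I}V^{(\tau)}$ (tensor product of $\mathbb{R}$-vector spaces), and for $\tau\in I$ define $$W^\tau_nV=\bigotimes_{\nu\ne\tau}V^{(\nu)}\otimes W_nV^{(\tau)},\qquad F^p_\tau V_{\mathbb{C}}=\bigotimes_{\nu\ne\tau}V^{(\nu)}_{\mathbb{C}}\otimes F^pV^{(\tau)}_{\mathbb{C}}.$$ Then $(V,\{W^\tau_\bullet\}_{\tau\in I},\{F^\bullet_\tau\}_{\tau\in I})$ is an object of $\mathrm{MHS}^{\boxtimes I}_{\mathbb{R}}$.
   Context: $\mathrm{MHS}^{\boxtimes I}_{\mathbb{R}}$ is the category of triples $(V,\{W^\tau_\bullet\}_{\tau\in I},\{F^\bullet_\tau\}_{\tau\in I})$ where $V$ is a finite-dimensional $\mathbb{R}$-vector space, each $W^\tau_\bullet$ is a finite ascending filtration of $V$ by $\mathbb{R}$-subspaces and each $F^\bullet_\tau$ a finite descending filtration of $V_{\mathbb{C}}=V\otimes\mathbb{C}$ by $\mathbb{C}$-subspaces, such that (1) for each $\tau\in I$, $(V,W^\tau_\bullet,F^\bullet_\tau)$ is a mixed $\mathbb{R}$-Hodge structure; (2) for $\tau\ne\nu$ in $I$, the subspaces $W^\nu_nV_{\mathbb{C}}$, $F^m_\nu V_{\mathbb{C}}$ and $\overline{F}^m_\nu V_{\mathbb{C}}$ are mixed $\mathbb{C}$-Hodge structures with respect to the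 filtrations induced by $W^\tau_\bullet$, $F^\bullet_\tau$ and $\overline{F}^\bullet_\tau$. A mixed $\mathbb{R}$-Hodge structure is a triple $(V,W_\bullet,F^\bullet)$ with $\operatorname{Gr}^W_nV_{\mathbb{C}}=\bigoplus_{p+q=n}(F^p\cap\overline{F}^q)\operatorname{Gr}^W_nV_{\mathbb{C}}$ for all $n$. *)

theory Defs
  imports Complex_Main "HOL-Library.Function_Algebras" "HOL-Library.FuncSet"
begin

text \<open>Finite-dimensional vector spaces are modelled by coordinate spaces:
  the vectors supported on a finite basis index set B.  Real vectors have
  values in real, complexified vectors values in complex.\<close>

definition vecs :: "'b set \<Rightarrow> ('b \<Rightarrow> 'a::zero) set" where
  "vecs B = {v. \<forall>x. x \<notin> B \<longrightarrow> v x = 0}"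

definition is_subspace :: "'b set \<Rightarrow> ('b \<Rightarrow> 'a::field) set \<Rightarrow> bool" where
  "is_subspace B S \<longleftrightarrow> S \<subseteq> vecs B \<and> 0 \<in> S \<and> (\<forall>x\<in>S. \<forall>y\<in>S. x + y \<in> S)
     \<and> (\<forall>c::'a. \<forall>x\<in>S. (\<lambda>k. c * x k) \<in> S)"

definition lspan :: "('c \<Rightarrow> 'a::field) set \<Rightarrow> ('c \<Rightarrow> 'a) set" where
  "lspan S = {x. \<exists>A c. finite A \<and> A \<subseteq> S \<and> x = (\<lambda>k. \<Sum>a\<in>A. c a * a k)}"

definition cplx :: "('b \<Rightarrow> real) set \<Rightarrow> ('b \<Rightarrow> complex) set" where
  "cplx S = {w. \<exists>u\<in>S. \<exists>v\<in>S. w = (\<lambda>k. complex_of_real (u k) + \<i> * complex_of_real (v k))}"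

definition conj_set :: "('b \<Rightarrow> complex) set \<Rightarrow> ('b \<Rightarrow> complex) set" where
  "conj_set S = (\<lambda>v k. cnj (v k)) ` S"

definition asc_filt :: "(('b \<Rightarrow> 'a::zero) set \<Rightarrow> bool) \<Rightarrow> ('b \<Rightarrow> 'a) set \<Rightarrow> (int \<Rightarrow> ('b \<Rightarrow> 'a) set) \<Rightarrow> bool" where
  "asc_filt sub V W \<longleftrightarrow> (\<forall>n. sub (W n) \<and> W n \<subseteq> V) \<and> (\<forall>n m. n \<le> m \<longrightarrow> W n \<subseteq> W m)
     \<and> (\<exists>a b. W a = {0} \<and> W b = V)"

definition desc_filt :: "(('b \<Rightarrow> 'a::zero) set \<Rightarrow> bool) \<Rightarrow> ('b \<Rightarrow> 'a) set \<Rightarrow> (int \<Rightarrow> ('b \<Rightarrow> 'a) set) \<Rightarrow> bool" where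
  "desc_filt sub V F \<longleftrightarrow> (\<forall>p. sub (F p) \<and> F p \<subseteq> V) \<and> (\<forall>p q. p \<le> q \<longrightarrow> F q \<subseteq> F p)
     \<and> (\<exists>a b. F a = V \<and> F b = {0})"

text \<open>Gr_n = Wn / Wm (Wm = W_{n-1}) equals the direct sum over p+q=n of
  (F^p \<inter> G^q) Gr_n, where F^p Gr_n is the image (F^p \<inter> Wn + Wm)/Wm;
  the quotient is unfolded explicitly.\<close>
definition hodge_split :: "('b \<Rightarrow> complex) set \<Rightarrow> ('b \<Rightarrow> complex) set \<Rightarrow> (int \<Rightarrow> ('b \<Rightarrow> complex) set)
    \<Rightarrow> (int \<Rightarrow> ('b \<Rightarrow> complex) set) \<Rightarrow> int \<Rightarrow> bool" where
  "hodge_split Wn Wm F G n \<longleftrightarrow>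
     (let H = (\<lambda>p. {x + y | x y. x \<in> F p \<inter> Wn \<and> y \<in> Wm} \<inter> {x + y | x y. x \<in> G (n - p) \<inter> Wn \<and> y \<in> Wm}) in
      (\<forall>x\<in>Wn. \<exists>P h. finite P \<and> (\<forall>p\<in>P. h p \<in> H p) \<and> x - (\<Sum>p\<in>P. h p) \<in> Wm) \<and>
      (\<forall>P h. finite P \<and> (\<forall>p\<in>P. h p \<in> H p) \<and> (\<Sum>p\<in>P. h p) \<in> Wm \<longrightarrow> (\<forall>p\<in>P. h p \<in> Wm)))"

definition mixed_C_HS :: "'b set \<Rightarrow> ('b \<Rightarrow> complex) set \<Rightarrow> (int \<Rightarrow> ('b \<Rightarrow> complex) set)
    \<Rightarrow> (int \<Rightarrow> ('b \<Rightarrow> complex) set) \<Rightarrow> (int \<Rightarrow> ('b \<Rightarrow> complex) set) \<Rightarrow> bool" where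
  "mixed_C_HS B U W F G \<longleftrightarrow> finite B \<and> is_subspace B U \<and> asc_filt (is_subspace B) U W
     \<and> desc_filt (is_subspace B) U F \<and> desc_filt (is_subspace B) U G
     \<and> (\<forall>n. hodge_split (W n) (W (n - 1)) F G n)"

definition mixed_R_HS :: "'b set \<Rightarrow> (int \<Rightarrow> ('b \<Rightarrow> real) set) \<Rightarrow> (int \<Rightarrow> ('b \<Rightarrow> complex) set) \<Rightarrow> bool" where
  "mixed_R_HS B W F \<longleftrightarrow> finite B \<and> asc_filt (is_subspace B) (vecs B) W
     \<and> desc_filt (is_subspace B) (vecs B) F
     \<and> (\<forall>n. hodge_split (cplx (W n)) (cplx (W (n - 1))) F (\<lambda>q. conj_set (F q)) n)"

definition MHS_box :: "'i set \<Rightarrow> 'b set \<Rightarrow> ('i \<Rightarrow> int \<Rightarrow> ('b \<Rightarrow> real) set)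
    \<Rightarrow> ('i \<Rightarrow> int \<Rightarrow> ('b \<Rightarrow> complex) set) \<Rightarrow> bool" where
  "MHS_box I B W F \<longleftrightarrow> finite B \<and> (\<forall>\<tau>\<in>I. mixed_R_HS B (W \<tau>) (F \<tau>)) \<and>
     (\<forall>\<tau>\<in>I. \<forall>\<nu>\<in>I. \<tau> \<noteq> \<nu> \<longrightarrow>
        (\<forall>U \<in> range (\<lambda>n. cplx (W \<nu> n)) \<union> range (F \<nu>) \<union> range (\<lambda>m. conj_set (F \<nu> m)).
           mixed_C_HS B U (\<lambda>k. cplx (W \<tau> k) \<inter> U) (\<lambda>p. F \<tau> p \<inter> U) (\<lambda>q. conj_set (F \<tau> q) \<inter> U)))"

text \<open>Tensor product of coordinate spaces: coordinates indexed by PiE I B.\<close>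
definition ptensor :: "'i set \<Rightarrow> ('i \<Rightarrow> 'b set) \<Rightarrow> ('i \<Rightarrow> 'b \<Rightarrow> 'a::comm_ring_1) \<Rightarrow> ('i \<Rightarrow> 'b) \<Rightarrow> 'a" where
  "ptensor I B v k = (if k \<in> PiE I B then (\<Prod>\<tau>\<in>I. v \<tau> (k \<tau>)) else 0)"

definition tensor_W :: "'i set \<Rightarrow> ('i \<Rightarrow> 'b set) \<Rightarrow> ('i \<Rightarrow> int \<Rightarrow> ('b \<Rightarrow> real) set)
    \<Rightarrow> 'i \<Rightarrow> int \<Rightarrow> (('i \<Rightarrow> 'b) \<Rightarrow> real) set" where
  "tensor_W I B W \<tau> n = lspan {ptensor I B v | v. \<forall>\<nu>\<in>I. v \<nu> \<in> (if \<nu> = \<tau> then W \<tau> n else vecs (B \<nu>))}"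

definition tensor_F :: "'i set \<Rightarrow> ('i \<Rightarrow> 'b set) \<Rightarrow> ('i \<Rightarrow> int \<Rightarrow> ('b \<Rightarrow> complex) set)
    \<Rightarrow> 'i \<Rightarrow> int \<Rightarrow> (('i \<Rightarrow> 'b) \<Rightarrow> complex) set" where
  "tensor_F I B F \<tau> p = lspan {ptensor I B v | v. \<forall>\<nu>\<in>I. v \<nu> \<in> (if \<nu> = \<tau> then F \<tau> p else vecs (B \<nu>))}"

end

(* A tensor is a function on the product index set PiE I B; its slice in direction nu through
   a point k is the vector of V^(nu) obtained by varying the nu-th coordinate of k.  The span of
   the pure tensors with factors in subspaces X nu is exactly the set of tensors all of whose
   nu-slices lie in X nu: pure tensors have this property, and conversely, applying a linear
   projection onto X nu slice by slice, one direction at a time, fixes such a tensor while mapping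
   pure tensors to pure tensors with nu-th factor in X nu.

   Hence W^tau_n, F^p_tau, their complexifications and conjugates, and their intersections with
   W^nu_n, F^m_nu or conj F^m_nu for nu /= tau, are all described by slice conditions that differ
   from a fixed family only in direction tau.  The filtration axioms transfer at once.  So does the
   Hodge decomposition of Gr_n: existence by pushing the decomposition of the tau-th factor of a
   pure tensor forward along the linear map z |-> v(tau := z), uniqueness by slicing in
   direction tau, where the decomposition in V^(tau) is unique. *)

theory Submission
  imports Defs
begin

definition lin_closed :: "('c \<Rightarrow> 'a::field) set \<Rightarrow> bool" where
  "lin_closed Z \<longleftrightarrow> 0 \<in> Z \<and> (\<forall>x\<in>Z. \<forall>y\<in>Z. x + y \<in> Z) \<and> (\<forall>c. \<forall>x\<in>Z. (\<lambda>k. c * x k) \<in> Z)"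

lemma is_subspace_iff_lin_closed: "is_subspace B S \<longleftrightarrow> S \<subseteq> vecs B \<and> lin_closed S"
  unfolding is_subspace_def lin_closed_def by auto

lemma is_subspace_vecs: "is_subspace B (vecs B :: ('b \<Rightarrow> 'a::field) set)"
  unfolding is_subspace_def vecs_def by auto

lemma sum_fun_apply: "(\<Sum>p\<in>P. h p) x = (\<Sum>p\<in>P. h p x)"
  by (induction P rule: infinite_finite_induct) auto

lemma lin_closed_sum_scaled:
  assumes "lin_closed Z" and "\<forall>a\<in>A. g a \<in> Z"
  shows "(\<lambda>k. \<Sum>a\<in>A. c a * g a k) \<in> Z"
  using assms(2)
proof (induction A rule: infinite_finite_induct)
  case (insert a A)
  have "(\<lambda>k. \<Sum>a\<in>insert a A. c a * g a k) = (\<lambda>k. c a * g a k) + (\<lambda>k. \<Sum>a\<in>A. c a * g a k)"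
    using insert.hyps by (simp add: plus_fun_def)
  then show ?case
    using assms(1) insert by (simp add: lin_closed_def)
qed (use assms(1) in \<open>simp_all add: lin_closed_def zero_fun_def\<close>)

lemma lin_closed_Int: "lin_closed S \<Longrightarrow> lin_closed T \<Longrightarrow> lin_closed (S \<inter> T)"
  unfolding lin_closed_def by auto

lemma lin_closed_set_plus:
  fixes S T :: "('a \<Rightarrow> 'b::field) set"
  assumes "lin_closed S" and "lin_closed T"
  shows "lin_closed {x + y | x y. x \<in> S \<and> y \<in> T}"
  unfolding lin_closed_def
proof (intro conjI ballI allI)
  have "(0::'a \<Rightarrow> 'b) = 0 + 0" by simp
  then show "0 \<in> {x + y | x y. x \<in> S \<and> y \<in> T}"
    using assms unfolding lin_closed_def by blast
next
  fix u v assume "u \<in> {x + y | x y. x \<in> S \<and> y \<in> T}" "v \<in> {x + y | x y. x \<in> S \<and> y \<in> T}"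
  then obtain x y x' y' where xy: "u = x + y" "v = x' + y'" "x \<in> S" "x' \<in> S" "y \<in> T" "y' \<in> T"
    by blast
  then have "u + v = (x + x') + (y + y')"
    by (simp add: algebra_simps)
  with xy(3-6) show "u + v \<in> {x + y | x y. x \<in> S \<and> y \<in> T}"
    using assms unfolding lin_closed_def by blast
next
  fix c u assume "u \<in> {x + y | x y. x \<in> S \<and> y \<in> T}"
  then obtain x y where xy: "u = x + y" "x \<in> S" "y \<in> T"
    by blast
  then have "(\<lambda>k. c * u k) = (\<lambda>k. c * x k) + (\<lambda>k. c * y k)"
    by (simp add: fun_eq_iff algebra_simps)
  with xy(2,3) show "(\<lambda>k. c * u k) \<in> {x + y | x y. x \<in> S \<and> y \<in> T}"
    using assms unfolding lin_closed_def by blast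
qed

lemma sum_Un_if_add:
  assumes "finite P" and "finite Q"
  shows "(\<Sum>p\<in>P \<union> Q. (if p \<in> P then f p else 0) + (if p \<in> Q then g p else 0)) = sum f P + sum g Q"
  using sum.inter_restrict[of "P \<union> Q" f P] sum.inter_restrict[of "P \<union> Q" g Q] assms
  by (simp add: sum.distrib Int_absorb1 Int_absorb2)

lemma lspanI: "finite A \<Longrightarrow> A \<subseteq> S \<Longrightarrow> x = (\<lambda>k. \<Sum>a\<in>A. c a * a k) \<Longrightarrow> x \<in> lspan S"
  unfolding lspan_def by blast

lemma lspanE:
  assumes "x \<in> lspan S"
  obtains A c where "finite A" "A \<subseteq> S" "x = (\<lambda>k. \<Sum>a\<in>A. c a * a k)"
  using assms unfolding lspan_def by auto

lemma lspan_superset: "S \<subseteq> lspan (S :: ('c \<Rightarrow> 'a::field) set)"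
proof
  fix x assume "x \<in> S"
  then show "x \<in> lspan S"
    unfolding lspan_def by (intro CollectI exI[of _ "{x}"] exI[of _ "\<lambda>_. 1"]) simp
qed

lemma lspan_subset:
  assumes "lin_closed Z" and "S \<subseteq> Z"
  shows "lspan S \<subseteq> Z"
proof
  fix x assume "x \<in> lspan S"
  then obtain A c where "A \<subseteq> S" "x = (\<lambda>k. \<Sum>a\<in>A. c a * a k)"
    by (rule lspanE)
  then show "x \<in> Z"
    using lin_closed_sum_scaled[OF assms(1), of A "\<lambda>a. a" c] assms(2) by auto
qed

lemma lin_closed_lspan: "lin_closed (lspan (S :: ('c \<Rightarrow> 'a::field) set))"
  unfolding lin_closed_def
proof (intro conjI ballI allI)
  show "0 \<in> lspan S"
    unfolding lspan_def by (intro CollectI exI[of _ "{}"]) (simp add: zero_fun_def)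
next
  fix x y assume "x \<in> lspan S" "y \<in> lspan S"
  obtain A c where A: "finite A" "A \<subseteq> S" "x = (\<lambda>k. \<Sum>a\<in>A. c a * a k)"
    using \<open>x \<in> lspan S\<close> by (rule lspanE)
  obtain A' c' where A': "finite A'" "A' \<subseteq> S" "y = (\<lambda>k. \<Sum>a\<in>A'. c' a * a k)"
    using \<open>y \<in> lspan S\<close> by (rule lspanE)
  define d where "d a = (if a \<in> A then c a else 0) + (if a \<in> A' then c' a else 0)" for a
  have d: "d a * a k = (if a \<in> A then c a * a k else 0) + (if a \<in> A' then c' a * a k else 0)" for a k
    by (simp add: d_def distrib_right)
  have "(\<Sum>a\<in>A \<union> A'. d a * a k) = (\<Sum>a\<in>A. c a * a k) + (\<Sum>a\<in>A'. c' a * a k)" for k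
    unfolding d by (rule sum_Un_if_add[OF A(1) A'(1)])
  then have "x + y = (\<lambda>k. \<Sum>a\<in>A \<union> A'. d a * a k)"
    using A(3) A'(3) by auto
  then show "x + y \<in> lspan S"
    using A A' by (intro lspanI[of "A \<union> A'" S _ d]) auto
next
  fix e x assume "x \<in> lspan S"
  then obtain A c where A: "finite A" "A \<subseteq> S" "x = (\<lambda>k. \<Sum>a\<in>A. c a * a k)"
    by (rule lspanE)
  then have "(\<lambda>k. e * x k) = (\<lambda>k. \<Sum>a\<in>A. (e * c a) * a k)"
    by (simp add: sum_distrib_left mult.assoc)
  with A(1,2) show "(\<lambda>k. e * x k) \<in> lspan S"
    by (rule lspanI)
qed

lemma lspan_sum_scaled: "\<forall>a\<in>A. g a \<in> S \<Longrightarrow> (\<lambda>k. \<Sum>a\<in>A. c a * g a k) \<in> lspan S"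
  by (rule lin_closed_sum_scaled[OF lin_closed_lspan]) (use lspan_superset in blast)

section \<open>Linear projections\<close>

definition scale_fun :: "'a::field \<Rightarrow> ('b \<Rightarrow> 'a) \<Rightarrow> ('b \<Rightarrow> 'a)" where
  "scale_fun c v = (\<lambda>k. c * v k)"

lemma vector_space_scale_fun: "vector_space (scale_fun :: 'a::field \<Rightarrow> ('b \<Rightarrow> 'a) \<Rightarrow> ('b \<Rightarrow> 'a))"
  by unfold_locales (auto simp: scale_fun_def algebra_simps)

definition is_projection_onto :: "('b \<Rightarrow> 'a::field) set \<Rightarrow> (('b \<Rightarrow> 'a) \<Rightarrow> ('b \<Rightarrow> 'a)) \<Rightarrow> bool" where
  "is_projection_onto X \<pi> \<longleftrightarrow> additive \<pi> \<and> (\<forall>c x. \<pi> (\<lambda>k. c * x k) = (\<lambda>k. c * \<pi> x k))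
     \<and> range \<pi> \<subseteq> X \<and> (\<forall>x\<in>X. \<pi> x = x)"

lemma projection_onto_exists:
  fixes X :: "('b \<Rightarrow> 'a::field) set"
  assumes "lin_closed X"
  shows "\<exists>\<pi>. is_projection_onto X \<pi>"
proof -
  interpret vs: vector_space "scale_fun :: 'a \<Rightarrow> ('b \<Rightarrow> 'a) \<Rightarrow> ('b \<Rightarrow> 'a)"
    by (rule vector_space_scale_fun)
  interpret vp: vector_space_pair "scale_fun :: 'a \<Rightarrow> ('b \<Rightarrow> 'a) \<Rightarrow> ('b \<Rightarrow> 'a)" scale_fun
    by (simp add: vector_space_pair_def vector_space_scale_fun)
  have "vs.subspace X"
    using assms unfolding vs.subspace_def lin_closed_def scale_fun_def by auto
  obtain C where C: "C \<subseteq> X" "vs.independent C" "X \<subseteq> vs.span C"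
    using vs.maximal_independent_subset by blast
  with \<open>vs.subspace X\<close> have span_C: "vs.span C = X"
    using vs.span_minimal by blast
  \<comment> \<open>extend the identity on a basis of X by zero on a complement\<close>
  define \<pi> where "\<pi> = vp.construct C id"
  have lin: "Vector_Spaces.linear scale_fun scale_fun \<pi>"
    unfolding \<pi>_def by (rule vp.linear_construct[OF C(2)])
  have "\<pi> x = x" if "x \<in> X" for x
    using vp.linear_eq_on[OF lin vs.linear_id, of x C] that span_C
    by (simp add: \<pi>_def vp.construct_basis[OF C(2)])
  moreover have "\<pi> x \<in> X" for x
    using vp.construct_in_span[OF C(2), of id x] span_C unfolding \<pi>_def by simp
  ultimately have "is_projection_onto X \<pi>"
    using lin unfolding is_projection_onto_def additive_def Vector_Spaces.linear_iff scale_fun_def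
    by auto
  then show ?thesis by blast
qed

section \<open>Slices\<close>

definition slice :: "('i \<Rightarrow> 'b set) \<Rightarrow> 'i \<Rightarrow> (('i \<Rightarrow> 'b) \<Rightarrow> 'a::zero) \<Rightarrow> ('i \<Rightarrow> 'b) \<Rightarrow> 'b \<Rightarrow> 'a" where
  "slice B \<nu> f k = (\<lambda>b. if b \<in> B \<nu> then f (k(\<nu> := b)) else 0)"

lemma slice_add:
  fixes f g :: "('i \<Rightarrow> 'b) \<Rightarrow> 'a::monoid_add"
  shows "slice B \<nu> (f + g) k = slice B \<nu> f k + slice B \<nu> g k"
  by (auto simp: slice_def fun_eq_iff)

lemma slice_zero: "slice B \<nu> 0 k = 0"
  by (simp add: slice_def zero_fun_def)

lemma slice_scale:
  fixes f :: "('i \<Rightarrow> 'b) \<Rightarrow> 'a::mult_zero"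
  shows "slice B \<nu> (\<lambda>k. c * f k) k = (\<lambda>b. c * slice B \<nu> f k b)"
  by (auto simp: slice_def fun_eq_iff)

lemma additive_slice: "additive (\<lambda>f :: ('i \<Rightarrow> 'b) \<Rightarrow> 'a::ab_group_add. slice B \<nu> f k)"
  by unfold_locales (rule slice_add)

lemma slice_sum_scaled:
  fixes g :: "'c \<Rightarrow> ('i \<Rightarrow> 'b) \<Rightarrow> 'a::field"
  shows "slice B \<nu> (\<lambda>k. \<Sum>a\<in>A. c a * g a k) k = (\<lambda>b. \<Sum>a\<in>A. c a * slice B \<nu> (g a) k b)"
  by (auto simp: slice_def fun_eq_iff)

lemma slice_in_vecs: "slice B \<nu> f k \<in> vecs (B \<nu>)"
  by (auto simp: slice_def vecs_def)

definition slicewise :: "'i set \<Rightarrow> ('i \<Rightarrow> 'b set) \<Rightarrow> ('i \<Rightarrow> ('b \<Rightarrow> 'a::zero) set) \<Rightarrow> (('i \<Rightarrow> 'b) \<Rightarrow> 'a) set" where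
  "slicewise I B X = {f \<in> vecs (PiE I B). \<forall>\<nu>\<in>I. \<forall>k\<in>PiE I B. slice B \<nu> f k \<in> X \<nu>}"

lemma slicewiseD: "f \<in> slicewise I B X \<Longrightarrow> \<nu> \<in> I \<Longrightarrow> k \<in> PiE I B \<Longrightarrow> slice B \<nu> f k \<in> X \<nu>"
  unfolding slicewise_def by blast

lemma slicewise_vecs: "slicewise I B (\<lambda>\<nu>. vecs (B \<nu>)) = vecs (PiE I B)"
  unfolding slicewise_def by (auto simp: slice_in_vecs)

lemma slicewise_Int: "slicewise I B X \<inter> slicewise I B X' = slicewise I B (\<lambda>\<nu>. X \<nu> \<inter> X' \<nu>)"
  unfolding slicewise_def by blast

lemma slicewise_cong: "(\<And>\<nu>. \<nu> \<in> I \<Longrightarrow> X \<nu> = X' \<nu>) \<Longrightarrow> slicewise I B X = slicewise I B X'"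
  unfolding slicewise_def by simp

lemma slicewise_mono: "(\<And>\<nu>. \<nu> \<in> I \<Longrightarrow> X \<nu> \<subseteq> X' \<nu>) \<Longrightarrow> slicewise I B X \<subseteq> slicewise I B X'"
  unfolding slicewise_def by blast

lemma slicewise_updI:
  assumes "f \<in> slicewise I B (X(\<tau> := S'))" and "\<And>k. k \<in> PiE I B \<Longrightarrow> slice B \<tau> f k \<in> S"
  shows "f \<in> slicewise I B (X(\<tau> := S))"
  using assms unfolding slicewise_def by auto

lemma lin_closed_slicewise:
  fixes X :: "'i \<Rightarrow> ('b \<Rightarrow> 'a::field) set"
  assumes "\<forall>\<nu>\<in>I. lin_closed (X \<nu>)"
  shows "lin_closed (slicewise I B X)"
  using assms unfolding lin_closed_def slicewise_def by (auto simp: vecs_def slice_add slice_zero slice_scale)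

lemma is_subspace_slicewise:
  "\<forall>\<nu>\<in>I. is_subspace (B \<nu>) (X \<nu>) \<Longrightarrow> is_subspace (PiE I B) (slicewise I B X)"
  using lin_closed_slicewise[of I X B] unfolding is_subspace_iff_lin_closed slicewise_def by auto

lemma slicewise_eq_zero:
  fixes X :: "'i \<Rightarrow> ('b \<Rightarrow> 'a::field) set"
  assumes "\<tau> \<in> I" and "X \<tau> = {0}" and "\<forall>\<nu>\<in>I. 0 \<in> X \<nu>"
  shows "slicewise I B X = {0}"
proof
  show "slicewise I B X \<subseteq> {0}"
  proof
    fix f assume f: "f \<in> slicewise I B X"
    have "f k = 0" for k
    proof (cases "k \<in> PiE I B")
      case True
      then have "slice B \<tau> f k (k \<tau>) = f k"
        using assms(1) by (auto simp: slice_def)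
      then show ?thesis
        using slicewiseD[OF f assms(1) True] assms(2) by simp
    next
      case False
      then show ?thesis
        using f unfolding slicewise_def vecs_def by blast
    qed
    then show "f \<in> {0}"
      by (simp add: fun_eq_iff)
  qed
  show "{0} \<subseteq> slicewise I B X"
    using assms(3) by (auto simp: slicewise_def vecs_def slice_zero)
qed

lemma ptensor_in_vecs: "ptensor I B v \<in> vecs (PiE I B)"
  by (simp add: ptensor_def vecs_def)

lemma ptensor_eq_prod_remove:
  assumes "finite I" and "\<tau> \<in> I"
  shows "ptensor I B v k = (if k \<in> PiE I B then (\<Prod>\<mu>\<in>I-{\<tau>}. v \<mu> (k \<mu>)) * v \<tau> (k \<tau>) else 0)"
  unfolding ptensor_def using prod.remove[OF assms, of "\<lambda>\<mu>. v \<mu> (k \<mu>)"] by (simp add: mult.commute)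

lemma additive_ptensor_upd:
  assumes "finite I" and "\<tau> \<in> I"
  shows "additive (\<lambda>z. ptensor I B (v(\<tau> := z)))"
proof
  have "(\<Prod>\<mu>\<in>I-{\<tau>}. (v(\<tau> := z)) \<mu> (k \<mu>)) = (\<Prod>\<mu>\<in>I-{\<tau>}. v \<mu> (k \<mu>))" for z k
    by (rule prod.cong) auto
  then show "ptensor I B (v(\<tau> := x + y)) = ptensor I B (v(\<tau> := x)) + ptensor I B (v(\<tau> := y))" for x y
    by (simp add: fun_eq_iff ptensor_eq_prod_remove[OF assms] distrib_left)
qed

lemma slice_ptensor:
  assumes "finite I" and "\<nu> \<in> I" and "v \<nu> \<in> vecs (B \<nu>)" and "k \<in> PiE I B"
  shows "slice B \<nu> (ptensor I B v) k = (\<lambda>b. (\<Prod>\<mu>\<in>I-{\<nu>}. v \<mu> (k \<mu>)) * v \<nu> b)"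
proof
  fix b
  show "slice B \<nu> (ptensor I B v) k b = (\<Prod>\<mu>\<in>I-{\<nu>}. v \<mu> (k \<mu>)) * v \<nu> b"
  proof (cases "b \<in> B \<nu>")
    case True
    then have "k(\<nu> := b) \<in> PiE I B"
      using assms(2,4) by (auto simp: PiE_iff extensional_def)
    moreover have "(\<Prod>\<mu>\<in>I-{\<nu>}. v \<mu> ((k(\<nu> := b)) \<mu>)) = (\<Prod>\<mu>\<in>I-{\<nu>}. v \<mu> (k \<mu>))"
      by (rule prod.cong) auto
    ultimately show ?thesis
      using True by (simp add: slice_def ptensor_eq_prod_remove[OF assms(1,2)])
  next
    case False
    then show ?thesis
      using assms(3) by (simp add: slice_def vecs_def)
  qed
qed

lemma ptensor_in_slicewise:
  assumes "finite I" and "\<forall>\<nu>\<in>I. is_subspace (B \<nu>) (X \<nu>)" and "\<forall>\<nu>\<in>I. v \<nu> \<in> X \<nu>"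
  shows "ptensor I B v \<in> slicewise I B X"
  unfolding slicewise_def
proof (safe intro!: ptensor_in_vecs)
  fix \<nu> k assume "\<nu> \<in> I" "k \<in> PiE I B"
  with assms have "v \<nu> \<in> X \<nu>" "lin_closed (X \<nu>)" "X \<nu> \<subseteq> vecs (B \<nu>)"
    by (auto simp: is_subspace_iff_lin_closed)
  then show "slice B \<nu> (ptensor I B v) k \<in> X \<nu>"
    using slice_ptensor[OF assms(1) \<open>\<nu> \<in> I\<close> _ \<open>k \<in> PiE I B\<close>, of v] by (auto simp: lin_closed_def)
qed

section \<open>Slicewise subspaces are spanned by pure tensors\<close>

definition slice_map :: "'i set \<Rightarrow> ('i \<Rightarrow> 'b set) \<Rightarrow> 'i \<Rightarrow> (('b \<Rightarrow> 'a) \<Rightarrow> ('b \<Rightarrow> 'a))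
     \<Rightarrow> (('i \<Rightarrow> 'b) \<Rightarrow> 'a::zero) \<Rightarrow> ('i \<Rightarrow> 'b) \<Rightarrow> 'a" where
  "slice_map I B \<nu> \<pi> f = (\<lambda>k. if k \<in> PiE I B then \<pi> (slice B \<nu> f k) (k \<nu>) else 0)"

lemma slice_map_fixed:
  assumes "\<nu> \<in> I" and "f \<in> vecs (PiE I B)" and "\<forall>k\<in>PiE I B. \<pi> (slice B \<nu> f k) = slice B \<nu> f k"
  shows "slice_map I B \<nu> \<pi> f = f"
proof
  fix k
  show "slice_map I B \<nu> \<pi> f k = f k"
    using assms by (cases "k \<in> PiE I B") (auto simp: slice_map_def slice_def vecs_def)
qed

lemma projection_sum_scaled:
  assumes "is_projection_onto X \<pi>"
  shows "\<pi> (\<lambda>b. \<Sum>a\<in>A. c a * s a b) = (\<lambda>b. \<Sum>a\<in>A. c a * \<pi> (s a) b)"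
proof -
  have "additive \<pi>" and hom: "\<And>c x. \<pi> (\<lambda>k. c * x k) = (\<lambda>k. c * \<pi> x k)"
    using assms unfolding is_projection_onto_def by blast+
  have "\<pi> (\<lambda>b. \<Sum>a\<in>A. c a * s a b) = \<pi> (\<Sum>a\<in>A. (\<lambda>b. c a * s a b))"
    by (rule arg_cong[where f = \<pi>]) (simp add: fun_eq_iff sum_fun_apply)
  also have "\<dots> = (\<Sum>a\<in>A. (\<lambda>b. c a * \<pi> (s a) b))"
    by (simp add: additive.sum[OF \<open>additive \<pi>\<close>] hom)
  finally show ?thesis
    by (simp add: fun_eq_iff sum_fun_apply)
qed

lemma slice_map_sum_scaled:
  assumes "is_projection_onto X \<pi>"
  shows "slice_map I B \<nu> \<pi> (\<lambda>k. \<Sum>a\<in>A. c a * g a k) = (\<lambda>k. \<Sum>a\<in>A. c a * slice_map I B \<nu> \<pi> (g a) k)"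
  by (auto simp: slice_map_def slice_sum_scaled projection_sum_scaled[OF assms])

lemma slice_map_ptensor:
  assumes "is_projection_onto X \<pi>" and "finite I" and "\<nu> \<in> I" and "v \<nu> \<in> vecs (B \<nu>)"
  shows "slice_map I B \<nu> \<pi> (ptensor I B v) = ptensor I B (v(\<nu> := \<pi> (v \<nu>)))"
proof
  fix k
  have "(\<Prod>\<mu>\<in>I-{\<nu>}. (v(\<nu> := \<pi> (v \<nu>))) \<mu> (k \<mu>)) = (\<Prod>\<mu>\<in>I-{\<nu>}. v \<mu> (k \<mu>))"
    by (rule prod.cong) auto
  moreover have "\<pi> (\<lambda>b. c * v \<nu> b) = (\<lambda>b. c * \<pi> (v \<nu>) b)" for c
    using assms(1) unfolding is_projection_onto_def by blast
  ultimately show "slice_map I B \<nu> \<pi> (ptensor I B v) k = ptensor I B (v(\<nu> := \<pi> (v \<nu>))) k"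
    using slice_ptensor[where v = v and \<nu> = \<nu> and B = B, OF assms(2-4)]
    by (cases "k \<in> PiE I B")
      (simp_all add: slice_map_def ptensor_eq_prod_remove[OF assms(2,3)])
qed

lemma lspan_ptensor_project:
  assumes "finite I" and "\<nu> \<in> I" and "is_projection_onto X \<pi>" and "Y \<nu> \<subseteq> vecs (B \<nu>)"
    and "f \<in> lspan {ptensor I B v | v. \<forall>\<mu>\<in>I. v \<mu> \<in> Y \<mu>}"
    and "f \<in> vecs (PiE I B)" and "\<forall>k\<in>PiE I B. slice B \<nu> f k \<in> X"
  shows "f \<in> lspan {ptensor I B v | v. \<forall>\<mu>\<in>I. v \<mu> \<in> (Y(\<nu> := X)) \<mu>}"
proof -
  have "\<forall>x\<in>X. \<pi> x = x" and "\<forall>x. \<pi> x \<in> X"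
    using assms(3) unfolding is_projection_onto_def by auto
  obtain A c where A: "A \<subseteq> {ptensor I B v | v. \<forall>\<mu>\<in>I. v \<mu> \<in> Y \<mu>}" "f = (\<lambda>k. \<Sum>a\<in>A. c a * a k)"
    using assms(5) by (rule lspanE)
  have "f = slice_map I B \<nu> \<pi> f"
    using \<open>\<forall>x\<in>X. \<pi> x = x\<close> assms(2,6,7) by (intro slice_map_fixed[symmetric]) auto
  also have "\<dots> = (\<lambda>k. \<Sum>a\<in>A. c a * slice_map I B \<nu> \<pi> a k)"
    unfolding A(2) by (rule slice_map_sum_scaled[OF assms(3)])
  also have "\<dots> \<in> lspan {ptensor I B v | v. \<forall>\<mu>\<in>I. v \<mu> \<in> (Y(\<nu> := X)) \<mu>}"
  proof (rule lspan_sum_scaled, rule ballI)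
    fix a assume "a \<in> A"
    then obtain v where v: "a = ptensor I B v" "\<forall>\<mu>\<in>I. v \<mu> \<in> Y \<mu>"
      using A(1) by blast
    then have "slice_map I B \<nu> \<pi> a = ptensor I B (v(\<nu> := \<pi> (v \<nu>)))"
      using assms(2,4) by (auto intro: slice_map_ptensor[OF assms(3,1,2)])
    moreover have "\<forall>\<mu>\<in>I. (v(\<nu> := \<pi> (v \<nu>))) \<mu> \<in> (Y(\<nu> := X)) \<mu>"
      using v(2) \<open>\<forall>x. \<pi> x \<in> X\<close> by simp
    ultimately show "slice_map I B \<nu> \<pi> a \<in> {ptensor I B v | v. \<forall>\<mu>\<in>I. v \<mu> \<in> (Y(\<nu> := X)) \<mu>}"
      by blast
  qed
  finally show ?thesis .
qed

lemma vecs_subset_lspan_ptensor: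
  fixes B :: "'i \<Rightarrow> 'b set"
  assumes "finite I" and "\<forall>\<nu>\<in>I. finite (B \<nu>)"
  shows "vecs (PiE I B) \<subseteq> lspan {ptensor I B v | v. \<forall>\<nu>\<in>I. v \<nu> \<in> (vecs (B \<nu>) :: ('b \<Rightarrow> 'a::field) set)}"
proof
  fix f :: "('i \<Rightarrow> 'b) \<Rightarrow> 'a" assume f: "f \<in> vecs (PiE I B)"
  define e :: "('i \<Rightarrow> 'b) \<Rightarrow> 'i \<Rightarrow> 'b \<Rightarrow> 'a" where "e j \<mu> b = (if b = j \<mu> then 1 else 0)" for j \<mu> b
  have e: "ptensor I B (e j) k = (if k = j then 1 else 0)" if j: "j \<in> PiE I B" for j k
  proof (cases "k \<in> PiE I B")
    case True
    show ?thesis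
    proof (cases "k = j")
      case False
      with True j obtain \<mu> where "\<mu> \<in> I" "k \<mu> \<noteq> j \<mu>"
        by (metis PiE_ext)
      with True False assms(1) show ?thesis
        by (auto simp: ptensor_def e_def intro!: prod_zero)
    qed (simp add: ptensor_def e_def j)
  qed (use j in \<open>auto simp: ptensor_def\<close>)
  have "f k = (\<Sum>j\<in>PiE I B. f j * ptensor I B (e j) k)" for k
  proof -
    have "(\<Sum>j\<in>PiE I B. f j * ptensor I B (e j) k) = (\<Sum>j\<in>PiE I B. if k = j then f j else 0)"
      by (rule sum.cong) (simp_all add: e)
    then show ?thesis
      using f assms by (simp add: vecs_def finite_PiE)
  qed
  then have "f = (\<lambda>k. \<Sum>j\<in>PiE I B. f j * ptensor I B (e j) k)" ..
  also have "\<dots> \<in> lspan {ptensor I B v | v. \<forall>\<nu>\<in>I. v \<nu> \<in> vecs (B \<nu>)}"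
  proof (rule lspan_sum_scaled, rule ballI)
    fix j assume "j \<in> PiE I B"
    then have "\<forall>\<nu>\<in>I. e j \<nu> \<in> vecs (B \<nu>)"
      by (auto simp: e_def vecs_def)
    then show "ptensor I B (e j) \<in> {ptensor I B v | v. \<forall>\<nu>\<in>I. v \<nu> \<in> vecs (B \<nu>)}"
      by blast
  qed
  finally show "f \<in> lspan {ptensor I B v | v. \<forall>\<nu>\<in>I. v \<nu> \<in> vecs (B \<nu>)}" .
qed

lemma slicewise_subset_lspan_ptensor:
  fixes X :: "'i \<Rightarrow> ('b \<Rightarrow> 'a::field) set"
  assumes "finite I" and "\<forall>\<nu>\<in>I. finite (B \<nu>)" and "\<forall>\<nu>\<in>I. is_subspace (B \<nu>) (X \<nu>)"
  shows "slicewise I B X \<subseteq> lspan {ptensor I B v | v. \<forall>\<nu>\<in>I. v \<nu> \<in> X \<nu>}"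
proof -
  have "\<forall>\<nu>\<in>I. \<exists>\<pi>. is_projection_onto (X \<nu>) \<pi>"
    using assms(3) by (auto simp: is_subspace_iff_lin_closed intro!: projection_onto_exists)
  then obtain \<pi> where \<pi>: "\<forall>\<nu>\<in>I. is_projection_onto (X \<nu>) (\<pi> \<nu>)"
    using bchoice[of I "\<lambda>\<nu> \<pi>. is_projection_onto (X \<nu>) \<pi>"] by blast
  \<comment> \<open>impose the slice conditions one direction at a time\<close>
  define Y where "Y J \<nu> = (if \<nu> \<in> J then X \<nu> else vecs (B \<nu>))" for J \<nu>
  have "slicewise I B (Y J) \<subseteq> lspan {ptensor I B v | v. \<forall>\<nu>\<in>I. v \<nu> \<in> Y J \<nu>}" if "finite J" "J \<subseteq> I" for J
    using that
  proof (induction J rule: finite_induct)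
    case empty
    have "Y {} = (\<lambda>\<nu>. vecs (B \<nu>))"
      by (simp add: Y_def fun_eq_iff)
    then show ?case
      using vecs_subset_lspan_ptensor[OF assms(1,2)] by (simp add: slicewise_vecs)
  next
    case (insert a J)
    then have "a \<in> I" and "a \<notin> J"
      by auto
    have Y_insert: "Y (insert a J) = (Y J)(a := X a)"
      by (simp add: Y_def fun_eq_iff)
    show ?case
    proof
      fix f assume f: "f \<in> slicewise I B (Y (insert a J))"
      have "slicewise I B (Y (insert a J)) \<subseteq> slicewise I B (Y J)"
        using assms(3) by (intro slicewise_mono) (auto simp: Y_def is_subspace_iff_lin_closed)
      with f insert.IH insert.prems have "f \<in> lspan {ptensor I B v | v. \<forall>\<nu>\<in>I. v \<nu> \<in> Y J \<nu>}"
        by blast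
      moreover have "f \<in> vecs (PiE I B)" and "\<forall>k\<in>PiE I B. slice B a f k \<in> X a"
        using f \<open>a \<in> I\<close> by (auto simp: slicewise_def Y_def)
      moreover have "Y J a \<subseteq> vecs (B a)"
        using \<open>a \<notin> J\<close> by (simp add: Y_def)
      ultimately show "f \<in> lspan {ptensor I B v | v. \<forall>\<nu>\<in>I. v \<nu> \<in> Y (insert a J) \<nu>}"
        unfolding Y_insert using \<pi> \<open>a \<in> I\<close> by (intro lspan_ptensor_project[OF assms(1)]) auto
    qed
  qed
  from this[OF assms(1) order_refl] show ?thesis
    using slicewise_cong[of I "Y I" X B] by (simp add: Y_def)
qed

theorem slicewise_eq_lspan_ptensor:
  fixes X :: "'i \<Rightarrow> ('b \<Rightarrow> 'a::field) set"
  assumes "finite I" and "\<forall>\<nu>\<in>I. finite (B \<nu>)" and "\<forall>\<nu>\<in>I. is_subspace (B \<nu>) (X \<nu>)"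
  shows "slicewise I B X = lspan {ptensor I B v | v. \<forall>\<nu>\<in>I. v \<nu> \<in> X \<nu>}"
proof
  have "lin_closed (slicewise I B X)"
    using assms(3) by (intro lin_closed_slicewise) (simp add: is_subspace_iff_lin_closed)
  then show "lspan {ptensor I B v | v. \<forall>\<nu>\<in>I. v \<nu> \<in> X \<nu>} \<subseteq> slicewise I B X"
    by (rule lspan_subset) (use ptensor_in_slicewise[OF assms(1,3)] in blast)
qed (rule slicewise_subset_lspan_ptensor[OF assms])

lemma lspan_ptensor_upd_eq_slicewise:
  fixes S :: "('b \<Rightarrow> 'a::field) set"
  assumes "finite I" and "\<forall>\<nu>\<in>I. finite (B \<nu>)" and "is_subspace (B \<tau>) S"
  shows "lspan {ptensor I B v | v. \<forall>\<nu>\<in>I. v \<nu> \<in> (if \<nu> = \<tau> then S else vecs (B \<nu>))}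
    = slicewise I B ((\<lambda>\<nu>. vecs (B \<nu>))(\<tau> := S))"
proof -
  have "\<forall>\<nu>\<in>I. is_subspace (B \<nu>) (((\<lambda>\<nu>. vecs (B \<nu>))(\<tau> := S)) \<nu>)"
    using assms(3) by (auto simp: is_subspace_def vecs_def)
  then show ?thesis
    by (simp add: slicewise_eq_lspan_ptensor[OF assms(1,2)] fun_upd_def)
qed

section \<open>Complexification and conjugation\<close>

lemma cplx_mono: "S \<subseteq> S' \<Longrightarrow> cplx S \<subseteq> cplx S'"
  unfolding cplx_def by blast

lemma conj_set_mono: "S \<subseteq> S' \<Longrightarrow> conj_set S \<subseteq> conj_set S'"
  unfolding conj_set_def by blast

lemma cplx_zero: "cplx {0} = {0}"
  unfolding cplx_def by (auto simp: zero_fun_def)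

lemma conj_set_zero: "conj_set {0} = {0}"
  unfolding conj_set_def by (auto simp: zero_fun_def)

lemma mem_cplx_iff: "w \<in> cplx S \<longleftrightarrow> (\<lambda>k. Re (w k)) \<in> S \<and> (\<lambda>k. Im (w k)) \<in> S"
proof
  assume "w \<in> cplx S"
  then obtain u v where "u \<in> S" "v \<in> S" "w = (\<lambda>k. complex_of_real (u k) + \<i> * complex_of_real (v k))"
    unfolding cplx_def by blast
  then show "(\<lambda>k. Re (w k)) \<in> S \<and> (\<lambda>k. Im (w k)) \<in> S"
    by simp
next
  assume "(\<lambda>k. Re (w k)) \<in> S \<and> (\<lambda>k. Im (w k)) \<in> S"
  moreover have "w = (\<lambda>k. complex_of_real (Re (w k)) + \<i> * complex_of_real (Im (w k)))"
    by (simp add: fun_eq_iff complex_eq_iff)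
  ultimately show "w \<in> cplx S"
    unfolding cplx_def by (intro CollectI bexI[of _ "\<lambda>k. Re (w k)"] bexI[of _ "\<lambda>k. Im (w k)"]) auto
qed

lemma mem_conj_set_iff: "w \<in> conj_set S \<longleftrightarrow> (\<lambda>k. cnj (w k)) \<in> S"
  unfolding conj_set_def by (auto intro: image_eqI[where x = "\<lambda>k. cnj (w k)"])

lemma cplx_vecs: "cplx (vecs B) = vecs B"
  by (auto simp: mem_cplx_iff vecs_def complex_eq_iff)

lemma conj_set_vecs: "conj_set (vecs B) = vecs B"
  by (auto simp: mem_conj_set_iff vecs_def)

lemma cplx_slicewise: "cplx (slicewise I B X) = slicewise I B (\<lambda>\<nu>. cplx (X \<nu>))"
proof -
  have "slice B \<nu> (\<lambda>k. Re (w k)) k = (\<lambda>b. Re (slice B \<nu> w k b))"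
    and "slice B \<nu> (\<lambda>k. Im (w k)) k = (\<lambda>b. Im (slice B \<nu> w k b))" for w \<nu> k
    by (auto simp: slice_def)
  then show ?thesis
    using cplx_vecs[of "PiE I B"] by (auto simp: mem_cplx_iff slicewise_def)
qed

lemma conj_set_slicewise: "conj_set (slicewise I B X) = slicewise I B (\<lambda>\<nu>. conj_set (X \<nu>))"
proof -
  have "slice B \<nu> (\<lambda>k. cnj (w k)) k = (\<lambda>b. cnj (slice B \<nu> w k b))" for w \<nu> k
    by (auto simp: slice_def)
  then show ?thesis
    using conj_set_vecs[of "PiE I B"] by (auto simp: mem_conj_set_iff slicewise_def)
qed

lemma lin_closed_cplx:
  assumes "lin_closed S"
  shows "lin_closed (cplx S)"
proof -
  have add: "x + y \<in> S" if "x \<in> S" "y \<in> S" for x y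
    using assms that unfolding lin_closed_def by blast
  have scale: "(\<lambda>k. r * x k) \<in> S" if "x \<in> S" for x r
    using assms that unfolding lin_closed_def by blast
  have "0 \<in> cplx S"
    using assms by (simp add: mem_cplx_iff lin_closed_def zero_fun_def)
  moreover have "x + y \<in> cplx S" if "x \<in> cplx S" "y \<in> cplx S" for x y
    using that add by (simp add: mem_cplx_iff plus_fun_def)
  moreover have "(\<lambda>k. c * x k) \<in> cplx S" if "x \<in> cplx S" for c x
  proof -
    from that have x: "(\<lambda>k. Re (x k)) \<in> S" "(\<lambda>k. Im (x k)) \<in> S"
      by (simp_all add: mem_cplx_iff)
    have "(\<lambda>k. Re (c * x k)) = (\<lambda>k. Re c * Re (x k)) + (\<lambda>k. (- Im c) * Im (x k))"
      by (simp add: fun_eq_iff)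
    also have "\<dots> \<in> S"
      using x by (intro add scale)
    finally have "(\<lambda>k. Re (c * x k)) \<in> S" .
    moreover have "(\<lambda>k. Im (c * x k)) = (\<lambda>k. Im c * Re (x k)) + (\<lambda>k. Re c * Im (x k))"
      by (simp add: fun_eq_iff)
    moreover have "\<dots> \<in> S"
      using x by (intro add scale)
    ultimately show ?thesis
      by (simp add: mem_cplx_iff)
  qed
  ultimately show ?thesis
    unfolding lin_closed_def by blast
qed

lemma is_subspace_cplx:
  assumes "is_subspace B S"
  shows "is_subspace B (cplx S)"
  using assms cplx_mono[of S "vecs B"] lin_closed_cplx[of S]
  by (simp add: is_subspace_iff_lin_closed cplx_vecs)

lemma lin_closed_conj_set:
  assumes "lin_closed S"
  shows "lin_closed (conj_set S)"
proof -
  have "(\<lambda>k. c * x k) \<in> conj_set S" if "x \<in> conj_set S" for c x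
    using that assms unfolding lin_closed_def mem_conj_set_iff by simp
  moreover have "x + y \<in> conj_set S" if "x \<in> conj_set S" "y \<in> conj_set S" for x y
    using that assms unfolding lin_closed_def mem_conj_set_iff by (simp add: plus_fun_def)
  moreover have "0 \<in> conj_set S"
    using assms unfolding lin_closed_def mem_conj_set_iff by (simp add: zero_fun_def)
  ultimately show ?thesis
    unfolding lin_closed_def by blast
qed

lemma is_subspace_conj_set:
  assumes "is_subspace B S"
  shows "is_subspace B (conj_set S)"
  using assms conj_set_mono[of S "vecs B"] lin_closed_conj_set[of S]
  by (simp add: is_subspace_iff_lin_closed conj_set_vecs)

lemma asc_filt_image:
  assumes "asc_filt sub V W"
    and "\<And>S. sub S \<Longrightarrow> sub' (\<Phi> S)" and "\<And>S S'. S \<subseteq> S' \<Longrightarrow> \<Phi> S \<subseteq> \<Phi> S'"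
    and "\<Phi> {0} = {0}" and "\<Phi> V = V'"
  shows "asc_filt sub' V' (\<lambda>n. \<Phi> (W n))"
proof -
  have W: "sub (W n)" "W n \<subseteq> V" "n \<le> m \<Longrightarrow> W n \<subseteq> W m" for n m
    using assms(1) unfolding asc_filt_def by blast+
  obtain a b where "W a = {0}" "W b = V"
    using assms(1) unfolding asc_filt_def by blast
  then have "\<Phi> (W a) = {0}" "\<Phi> (W b) = V'"
    using assms(4,5) by simp_all
  moreover have "sub' (\<Phi> (W n)) \<and> \<Phi> (W n) \<subseteq> V'" for n
    using assms(2)[OF W(1)] assms(3)[OF W(2)] assms(5) by simp
  moreover have "\<Phi> (W n) \<subseteq> \<Phi> (W m)" if "n \<le> m" for n m
    using assms(3)[OF W(3)[OF that]] .
  ultimately show ?thesis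
    unfolding asc_filt_def by blast
qed

lemma desc_filt_image:
  assumes "desc_filt sub V F"
    and "\<And>S. sub S \<Longrightarrow> sub' (\<Phi> S)" and "\<And>S S'. S \<subseteq> S' \<Longrightarrow> \<Phi> S \<subseteq> \<Phi> S'"
    and "\<Phi> {0} = {0}" and "\<Phi> V = V'"
  shows "desc_filt sub' V' (\<lambda>p. \<Phi> (F p))"
proof -
  have F: "sub (F p)" "F p \<subseteq> V" "p \<le> q \<Longrightarrow> F q \<subseteq> F p" for p q
    using assms(1) unfolding desc_filt_def by blast+
  obtain a b where "F a = V" "F b = {0}"
    using assms(1) unfolding desc_filt_def by blast
  then have "\<Phi> (F a) = V'" "\<Phi> (F b) = {0}"
    using assms(4,5) by simp_all
  moreover have "sub' (\<Phi> (F p)) \<and> \<Phi> (F p) \<subseteq> V'" for p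
    using assms(2)[OF F(1)] assms(3)[OF F(2)] assms(5) by simp
  moreover have "\<Phi> (F q) \<subseteq> \<Phi> (F p)" if "p \<le> q" for p q
    using assms(3)[OF F(3)[OF that]] .
  ultimately show ?thesis
    unfolding desc_filt_def by blast
qed

lemma asc_filt_cplx:
  assumes "asc_filt (is_subspace B) (vecs B) W"
  shows "asc_filt (is_subspace B) (vecs B) (\<lambda>n. cplx (W n))"
  by (rule asc_filt_image[where \<Phi> = cplx, OF assms])
    (simp_all add: is_subspace_cplx cplx_mono cplx_zero cplx_vecs)

lemma desc_filt_conj_set:
  assumes "desc_filt (is_subspace B) (vecs B) F"
  shows "desc_filt (is_subspace B) (vecs B) (\<lambda>p. conj_set (F p))"
  by (rule desc_filt_image[where \<Phi> = conj_set, OF assms])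
    (simp_all add: is_subspace_conj_set conj_set_mono conj_set_zero conj_set_vecs)

lemma is_subspace_slicewise_upd:
  assumes "\<forall>\<mu>\<in>I. is_subspace (B \<mu>) (Y \<mu>)" and "is_subspace (B \<tau>) S"
  shows "is_subspace (PiE I B) (slicewise I B (Y(\<tau> := S)))"
  using assms by (intro is_subspace_slicewise) simp

lemma slicewise_upd_mono: "S \<subseteq> S' \<Longrightarrow> slicewise I B (Y(\<tau> := S)) \<subseteq> slicewise I B (Y(\<tau> := S'))"
  by (rule slicewise_mono) simp

lemma slicewise_upd_zero:
  fixes Y :: "'i \<Rightarrow> ('b \<Rightarrow> 'a::field) set"
  assumes "\<tau> \<in> I" and "\<forall>\<mu>\<in>I. is_subspace (B \<mu>) (Y \<mu>)"
  shows "slicewise I B (Y(\<tau> := {0})) = {0}"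
  using assms by (intro slicewise_eq_zero) (auto simp: is_subspace_def)

lemma asc_filt_slicewise_upd:
  fixes Y :: "'i \<Rightarrow> ('b \<Rightarrow> 'a::field) set"
  assumes "\<tau> \<in> I" and "\<forall>\<mu>\<in>I. is_subspace (B \<mu>) (Y \<mu>)" and "Y \<tau> = vecs (B \<tau>)"
    and "asc_filt (is_subspace (B \<tau>)) (vecs (B \<tau>)) W"
  shows "asc_filt (is_subspace (PiE I B)) (slicewise I B Y) (\<lambda>n. slicewise I B (Y(\<tau> := W n)))"
proof (rule asc_filt_image[where \<Phi> = "\<lambda>S. slicewise I B (Y(\<tau> := S))", OF assms(4)])
  show "slicewise I B (Y(\<tau> := vecs (B \<tau>))) = slicewise I B Y"
    using assms(3) by (metis fun_upd_triv)
qed (simp_all add: is_subspace_slicewise_upd[OF assms(2)] slicewise_upd_mono slicewise_upd_zero[OF assms(1,2)])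

lemma desc_filt_slicewise_upd:
  fixes Y :: "'i \<Rightarrow> ('b \<Rightarrow> 'a::field) set"
  assumes "\<tau> \<in> I" and "\<forall>\<mu>\<in>I. is_subspace (B \<mu>) (Y \<mu>)" and "Y \<tau> = vecs (B \<tau>)"
    and "desc_filt (is_subspace (B \<tau>)) (vecs (B \<tau>)) F"
  shows "desc_filt (is_subspace (PiE I B)) (slicewise I B Y) (\<lambda>p. slicewise I B (Y(\<tau> := F p)))"
proof (rule desc_filt_image[where \<Phi> = "\<lambda>S. slicewise I B (Y(\<tau> := S))", OF assms(4)])
  show "slicewise I B (Y(\<tau> := vecs (B \<tau>))) = slicewise I B Y"
    using assms(3) by (metis fun_upd_triv)
qed (simp_all add: is_subspace_slicewise_upd[OF assms(2)] slicewise_upd_mono slicewise_upd_zero[OF assms(1,2)])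

section \<open>Hodge decompositions\<close>

(* The preimage in Wn of the Hodge piece (F p \<inter> G (n - p)) Gr_n of Gr_n = Wn / Wm, cf. hodge_split. *)

definition hodge_piece :: "'v::plus set \<Rightarrow> 'v set \<Rightarrow> (int \<Rightarrow> 'v set) \<Rightarrow> (int \<Rightarrow> 'v set) \<Rightarrow> int \<Rightarrow> int \<Rightarrow> 'v set" where
  "hodge_piece Wn Wm F G n p =
     {x + y | x y. x \<in> F p \<inter> Wn \<and> y \<in> Wm} \<inter> {x + y | x y. x \<in> G (n - p) \<inter> Wn \<and> y \<in> Wm}"

definition decomposable_mod :: "('p \<Rightarrow> 'v::ab_group_add set) \<Rightarrow> 'v set \<Rightarrow> 'v set" where
  "decomposable_mod H M = {x. \<exists>P h. finite P \<and> (\<forall>p\<in>P. h p \<in> H p) \<and> x - (\<Sum>p\<in>P. h p) \<in> M}"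

lemma decomposable_modI:
  "finite P \<Longrightarrow> \<forall>p\<in>P. h p \<in> H p \<Longrightarrow> x - (\<Sum>p\<in>P. h p) \<in> M \<Longrightarrow> x \<in> decomposable_mod H M"
  unfolding decomposable_mod_def by blast

lemma decomposable_modE:
  assumes "x \<in> decomposable_mod H M"
  obtains P h where "finite P" "\<forall>p\<in>P. h p \<in> H p" "x - (\<Sum>p\<in>P. h p) \<in> M"
  using assms unfolding decomposable_mod_def by blast

lemma hodge_split_iff:
  "hodge_split Wn Wm F G n \<longleftrightarrow> Wn \<subseteq> decomposable_mod (hodge_piece Wn Wm F G n) Wm \<and>
     (\<forall>P h. finite P \<and> (\<forall>p\<in>P. h p \<in> hodge_piece Wn Wm F G n p) \<and> (\<Sum>p\<in>P. h p) \<in> Wm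
        \<longrightarrow> (\<forall>p\<in>P. h p \<in> Wm))"
  unfolding hodge_split_def hodge_piece_def decomposable_mod_def Let_def by (simp add: subset_eq)

lemma lin_closed_hodge_piece:
  "lin_closed Wn \<Longrightarrow> lin_closed Wm \<Longrightarrow> lin_closed (F p) \<Longrightarrow> lin_closed (G (n - p))
    \<Longrightarrow> lin_closed (hodge_piece Wn Wm F G n p)"
  unfolding hodge_piece_def by (intro lin_closed_Int lin_closed_set_plus)

lemma hodge_piece_image:
  assumes "additive L" and "L ` (F p \<inter> Wn) \<subseteq> F' p \<inter> Wn'" and "L ` (G (n - p) \<inter> Wn) \<subseteq> G' (n - p) \<inter> Wn'"
    and "L ` Wm \<subseteq> Wm'"
  shows "L ` hodge_piece Wn Wm F G n p \<subseteq> hodge_piece Wn' Wm' F' G' n p"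
proof
  fix z assume "z \<in> L ` hodge_piece Wn Wm F G n p"
  then obtain x y x' y' where z: "z = L (x + y)" "x + y = x' + y'"
    and "x \<in> F p \<inter> Wn" "x' \<in> G (n - p) \<inter> Wn" "y \<in> Wm" "y' \<in> Wm"
    unfolding hodge_piece_def by blast
  then have "L x \<in> F' p \<inter> Wn'" "L x' \<in> G' (n - p) \<inter> Wn'" "L y \<in> Wm'" "L y' \<in> Wm'"
    using assms(2-4) by blast+
  moreover have "z = L x + L y" "z = L x' + L y'"
    using z additive.add[OF assms(1)] by metis+
  ultimately show "z \<in> hodge_piece Wn' Wm' F' G' n p"
    unfolding hodge_piece_def by blast
qed

lemma decomposable_mod_image:
  assumes "additive L" and "x \<in> decomposable_mod H M" and "\<And>p. L ` H p \<subseteq> H' p" and "L ` M \<subseteq> M'"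
  shows "L x \<in> decomposable_mod H' M'"
proof -
  obtain P h where "finite P" "\<forall>p\<in>P. h p \<in> H p" "x - (\<Sum>p\<in>P. h p) \<in> M"
    using assms(2) by (rule decomposable_modE)
  moreover have "L x - (\<Sum>p\<in>P. L (h p)) = L (x - (\<Sum>p\<in>P. h p))"
    by (simp add: additive.diff[OF assms(1)] additive.sum[OF assms(1)])
  ultimately show ?thesis
    using assms(3,4) by (intro decomposable_modI[of P "\<lambda>p. L (h p)"]) auto
qed

lemma lin_closed_decomposable_mod:
  fixes H :: "'p \<Rightarrow> ('c \<Rightarrow> 'a::field) set"
  assumes H: "\<And>p. lin_closed (H p)" and M: "lin_closed M"
  shows "lin_closed (decomposable_mod H M)"
proof -
  have "0 \<in> decomposable_mod H M"
    using M by (intro decomposable_modI[of "{}"]) (simp_all add: lin_closed_def)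
  moreover have "x + y \<in> decomposable_mod H M"
    if x: "x \<in> decomposable_mod H M" and y: "y \<in> decomposable_mod H M" for x y
  proof -
    obtain P h where P: "finite P" "\<forall>p\<in>P. h p \<in> H p" "x - (\<Sum>p\<in>P. h p) \<in> M"
      using x by (rule decomposable_modE)
    obtain Q g where Q: "finite Q" "\<forall>p\<in>Q. g p \<in> H p" "y - (\<Sum>p\<in>Q. g p) \<in> M"
      using y by (rule decomposable_modE)
    define k where "k p = (if p \<in> P then h p else 0) + (if p \<in> Q then g p else 0)" for p
    have k: "k p \<in> H p" for p
      using P(2) Q(2) H[of p] unfolding k_def lin_closed_def by simp
    have "x + y - (\<Sum>p\<in>P \<union> Q. k p) = (x - (\<Sum>p\<in>P. h p)) + (y - (\<Sum>p\<in>Q. g p))"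
      unfolding k_def sum_Un_if_add[OF P(1) Q(1)] by (simp add: algebra_simps)
    also have "\<dots> \<in> M"
      using M P(3) Q(3) unfolding lin_closed_def by blast
    finally have "x + y - (\<Sum>p\<in>P \<union> Q. k p) \<in> M" .
    then show ?thesis
      using P(1) Q(1) k by (intro decomposable_modI[of "P \<union> Q" k]) auto
  qed
  moreover have "(\<lambda>k. c * x k) \<in> decomposable_mod H M" if x: "x \<in> decomposable_mod H M" for c x
  proof -
    obtain P h where P: "finite P" "\<forall>p\<in>P. h p \<in> H p" "x - (\<Sum>p\<in>P. h p) \<in> M"
      using x by (rule decomposable_modE)
    have "(\<lambda>k. c * x k) - (\<Sum>p\<in>P. (\<lambda>k. c * h p k)) = (\<lambda>k. c * (x - (\<Sum>p\<in>P. h p)) k)"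
      by (simp add: fun_eq_iff sum_fun_apply sum_distrib_left right_diff_distrib)
    also have "\<dots> \<in> M"
      using M P(3) unfolding lin_closed_def by blast
    finally show ?thesis
      using P(1,2) H unfolding lin_closed_def by (intro decomposable_modI[of P "\<lambda>p k. c * h p k"]) auto
  qed
  ultimately show ?thesis
    unfolding lin_closed_def by blast
qed

lemma slicewise_upd_subset_decomposable_mod:
  fixes Y :: "'i \<Rightarrow> ('b \<Rightarrow> 'a::field) set"
  assumes "finite I" and "\<forall>\<nu>\<in>I. finite (B \<nu>)" and "\<tau> \<in> I" and Y: "\<forall>\<mu>\<in>I. is_subspace (B \<mu>) (Y \<mu>)"
    and "is_subspace (B \<tau>) Wn" and "is_subspace (B \<tau>) Wm"
    and "\<And>p. is_subspace (B \<tau>) (F p)" and "\<And>q. is_subspace (B \<tau>) (G q)"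
    and split: "Wn \<subseteq> decomposable_mod (hodge_piece Wn Wm F G n) Wm"
  defines "T S \<equiv> slicewise I B (Y(\<tau> := S))"
  shows "T Wn \<subseteq> decomposable_mod (hodge_piece (T Wn) (T Wm) (\<lambda>p. T (F p)) (\<lambda>q. T (G q)) n) (T Wm)"
proof -
  have T_lin_closed: "lin_closed (T S)" if "is_subspace (B \<tau>) S" for S
    using is_subspace_slicewise_upd[OF Y that] unfolding T_def by (simp add: is_subspace_iff_lin_closed)
  have generator: "ptensor I B v \<in> decomposable_mod (hodge_piece (T Wn) (T Wm) (\<lambda>p. T (F p)) (\<lambda>q. T (G q)) n) (T Wm)"
    if v: "\<forall>\<mu>\<in>I. v \<mu> \<in> (Y(\<tau> := Wn)) \<mu>" for v
  proof -
    define L where "L z = ptensor I B (v(\<tau> := z))" for z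
    have L_T: "L ` S \<subseteq> T S" if "is_subspace (B \<tau>) S" for S
      unfolding L_def T_def using v Y that by (force intro!: ptensor_in_slicewise[OF assms(1)])
    have "v \<tau> \<in> Wn"
      using v assms(3) by force
    have "L (v \<tau>) \<in> decomposable_mod (hodge_piece (T Wn) (T Wm) (\<lambda>p. T (F p)) (\<lambda>q. T (G q)) n) (T Wm)"
    proof (rule decomposable_mod_image[where L = L])
      show "additive L"
        unfolding L_def by (rule additive_ptensor_upd[OF assms(1,3)])
      show "v \<tau> \<in> decomposable_mod (hodge_piece Wn Wm F G n) Wm"
        using \<open>v \<tau> \<in> Wn\<close> split by blast
      show "L ` Wm \<subseteq> T Wm"
        by (rule L_T[OF assms(6)])
      show "L ` hodge_piece Wn Wm F G n p \<subseteq> hodge_piece (T Wn) (T Wm) (\<lambda>p. T (F p)) (\<lambda>q. T (G q)) n p" for p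
        using L_T assms(5-8) by (intro hodge_piece_image \<open>additive L\<close>) blast+
    qed
    then show ?thesis
      by (simp add: L_def)
  qed
  have "T Wn = lspan {ptensor I B v | v. \<forall>\<mu>\<in>I. v \<mu> \<in> (Y(\<tau> := Wn)) \<mu>}"
    unfolding T_def using Y assms(5) by (intro slicewise_eq_lspan_ptensor[OF assms(1,2)]) simp
  also have "\<dots> \<subseteq> decomposable_mod (hodge_piece (T Wn) (T Wm) (\<lambda>p. T (F p)) (\<lambda>q. T (G q)) n) (T Wm)"
    using assms(5-8) generator
    by (intro lspan_subset lin_closed_decomposable_mod lin_closed_hodge_piece T_lin_closed) blast+
  finally show ?thesis .
qed

lemma slicewise_upd_hodge_unique:
  fixes Y :: "'i \<Rightarrow> ('b \<Rightarrow> 'a::field) set"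
  assumes "\<tau> \<in> I" and Y: "\<forall>\<mu>\<in>I. is_subspace (B \<mu>) (Y \<mu>)"
    and "is_subspace (B \<tau>) Wn" and "is_subspace (B \<tau>) Wm"
    and unique: "\<forall>P h. finite P \<and> (\<forall>p\<in>P. h p \<in> hodge_piece Wn Wm F G n p) \<and> (\<Sum>p\<in>P. h p) \<in> Wm
        \<longrightarrow> (\<forall>p\<in>P. h p \<in> Wm)"
  defines "T S \<equiv> slicewise I B (Y(\<tau> := S))"
  assumes "finite P" and h: "\<forall>p\<in>P. h p \<in> hodge_piece (T Wn) (T Wm) (\<lambda>p. T (F p)) (\<lambda>q. T (G q)) n p"
    and "(\<Sum>p\<in>P. h p) \<in> T Wm" and "p \<in> P"
  shows "h p \<in> T Wm"
proof -
  have "h p \<in> T (vecs (B \<tau>))"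
  proof -
    have "lin_closed (T (vecs (B \<tau>)))"
      using is_subspace_slicewise_upd[OF Y is_subspace_vecs] unfolding T_def is_subspace_iff_lin_closed ..
    moreover have "T Wn \<subseteq> T (vecs (B \<tau>))" and "T Wm \<subseteq> T (vecs (B \<tau>))"
      using assms(3,4) unfolding T_def is_subspace_def by (simp_all add: slicewise_upd_mono)
    moreover obtain x y where "h p = x + y" "x \<in> T Wn" "y \<in> T Wm"
      using h \<open>p \<in> P\<close> unfolding hodge_piece_def by blast
    ultimately show ?thesis
      unfolding lin_closed_def by auto
  qed
  moreover have "slice B \<tau> (h p) k \<in> Wm" if k: "k \<in> PiE I B" for k
  proof -
    have slice_T: "(\<lambda>f. slice B \<tau> f k) ` T S \<subseteq> S" for S
      unfolding T_def using slicewiseD[OF _ assms(1) k] by fastforce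
    have piece: "(\<lambda>f. slice B \<tau> f k) ` hodge_piece (T Wn) (T Wm) (\<lambda>p. T (F p)) (\<lambda>q. T (G q)) n q
        \<subseteq> hodge_piece Wn Wm F G n q" for q
      by (rule hodge_piece_image[OF additive_slice]) (use slice_T in blast)+
    have "slice B \<tau> (h q) k \<in> hodge_piece Wn Wm F G n q" if "q \<in> P" for q
      using piece[of q] h that by blast
    moreover have "(\<Sum>q\<in>P. slice B \<tau> (h q) k) \<in> Wm"
    proof -
      have "slice B \<tau> (\<Sum>q\<in>P. h q) k \<in> Wm"
        using slice_T[of Wm] \<open>(\<Sum>p\<in>P. h p) \<in> T Wm\<close> by blast
      then show ?thesis
        by (simp only: additive.sum[OF additive_slice])
    qed
    ultimately show ?thesis
      using unique[rule_format, of P "\<lambda>q. slice B \<tau> (h q) k"] \<open>finite P\<close> \<open>p \<in> P\<close> by blast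
  qed
  ultimately show ?thesis
    unfolding T_def by (rule slicewise_updI)
qed

lemma hodge_split_slicewise_upd:
  fixes Y :: "'i \<Rightarrow> ('b \<Rightarrow> complex) set"
  assumes "finite I" and "\<forall>\<nu>\<in>I. finite (B \<nu>)" and "\<tau> \<in> I" and "\<forall>\<mu>\<in>I. is_subspace (B \<mu>) (Y \<mu>)"
    and "is_subspace (B \<tau>) Wn" and "is_subspace (B \<tau>) Wm"
    and "\<And>p. is_subspace (B \<tau>) (F p)" and "\<And>q. is_subspace (B \<tau>) (G q)"
    and "hodge_split Wn Wm F G n"
  shows "hodge_split (slicewise I B (Y(\<tau> := Wn))) (slicewise I B (Y(\<tau> := Wm)))
    (\<lambda>p. slicewise I B (Y(\<tau> := F p))) (\<lambda>q. slicewise I B (Y(\<tau> := G q))) n"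
proof -
  have split: "Wn \<subseteq> decomposable_mod (hodge_piece Wn Wm F G n) Wm"
    and unique: "\<forall>P h. finite P \<and> (\<forall>p\<in>P. h p \<in> hodge_piece Wn Wm F G n p) \<and> (\<Sum>p\<in>P. h p) \<in> Wm
        \<longrightarrow> (\<forall>p\<in>P. h p \<in> Wm)"
    using assms(9) unfolding hodge_split_iff by blast+
  show ?thesis
    unfolding hodge_split_iff
  proof (intro conjI allI impI ballI)
    show "slicewise I B (Y(\<tau> := Wn)) \<subseteq> decomposable_mod (hodge_piece (slicewise I B (Y(\<tau> := Wn)))
        (slicewise I B (Y(\<tau> := Wm))) (\<lambda>p. slicewise I B (Y(\<tau> := F p))) (\<lambda>q. slicewise I B (Y(\<tau> := G q))) n)
        (slicewise I B (Y(\<tau> := Wm)))"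
      by (rule slicewise_upd_subset_decomposable_mod[OF assms(1-8) split])
  next
    fix P h p
    assume "finite P \<and> (\<forall>p\<in>P. h p \<in> hodge_piece (slicewise I B (Y(\<tau> := Wn))) (slicewise I B (Y(\<tau> := Wm)))
        (\<lambda>p. slicewise I B (Y(\<tau> := F p))) (\<lambda>q. slicewise I B (Y(\<tau> := G q))) n p)
      \<and> (\<Sum>p\<in>P. h p) \<in> slicewise I B (Y(\<tau> := Wm))" and "p \<in> P"
    then show "h p \<in> slicewise I B (Y(\<tau> := Wm))"
      by (intro slicewise_upd_hodge_unique[OF assms(3-6) unique]) auto
  qed
qed

section \<open>Tensor products of mixed Hodge structures\<close>

lemma mixed_R_HS_subspaces:
  assumes "mixed_R_HS B W F"
  shows "is_subspace B (W n)" and "is_subspace B (cplx (W n))"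
    and "is_subspace B (F p)" and "is_subspace B (conj_set (F p))"
proof -
  show W: "is_subspace B (W n)"
    using assms unfolding mixed_R_HS_def asc_filt_def by blast
  show F: "is_subspace B (F p)"
    using assms unfolding mixed_R_HS_def desc_filt_def by blast
  show "is_subspace B (cplx (W n))"
    by (rule is_subspace_cplx[OF W])
  show "is_subspace B (conj_set (F p))"
    by (rule is_subspace_conj_set[OF F])
qed

lemma cplx_slicewise_upd:
  "cplx (slicewise I B ((\<lambda>\<mu>. vecs (B \<mu>))(\<tau> := S))) = slicewise I B ((\<lambda>\<mu>. vecs (B \<mu>))(\<tau> := cplx S))"
  unfolding cplx_slicewise by (rule slicewise_cong) (simp add: cplx_vecs)

lemma conj_set_slicewise_upd:
  "conj_set (slicewise I B ((\<lambda>\<mu>. vecs (B \<mu>))(\<tau> := S))) = slicewise I B ((\<lambda>\<mu>. vecs (B \<mu>))(\<tau> := conj_set S))"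
  unfolding conj_set_slicewise by (rule slicewise_cong) (simp add: conj_set_vecs)

lemma slicewise_upd_Int:
  assumes "\<tau> \<noteq> \<nu>" and "S \<subseteq> vecs (B \<tau>)" and "A \<subseteq> vecs (B \<nu>)"
  shows "slicewise I B ((\<lambda>\<mu>. vecs (B \<mu>))(\<tau> := S)) \<inter> slicewise I B ((\<lambda>\<mu>. vecs (B \<mu>))(\<nu> := A))
    = slicewise I B ((\<lambda>\<mu>. vecs (B \<mu>))(\<nu> := A, \<tau> := S))"
  unfolding slicewise_Int using assms by (intro slicewise_cong) auto

lemma tensor_W_eq_slicewise:
  assumes "finite I" and "\<forall>\<nu>\<in>I. finite (B \<nu>)" and "is_subspace (B \<tau>) (W \<tau> n)"
  shows "tensor_W I B W \<tau> n = slicewise I B ((\<lambda>\<mu>. vecs (B \<mu>))(\<tau> := W \<tau> n))"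
  unfolding tensor_W_def by (rule lspan_ptensor_upd_eq_slicewise[OF assms])

lemma tensor_F_eq_slicewise:
  assumes "finite I" and "\<forall>\<nu>\<in>I. finite (B \<nu>)" and "is_subspace (B \<tau>) (F \<tau> p)"
  shows "tensor_F I B F \<tau> p = slicewise I B ((\<lambda>\<mu>. vecs (B \<mu>))(\<tau> := F \<tau> p))"
  unfolding tensor_F_def by (rule lspan_ptensor_upd_eq_slicewise[OF assms])

lemma mixed_C_HS_slicewise_upd:
  fixes Y :: "'i \<Rightarrow> ('b \<Rightarrow> complex) set"
  assumes "finite I" and "\<forall>\<nu>\<in>I. finite (B \<nu>)" and "\<tau> \<in> I" and "\<forall>\<mu>\<in>I. is_subspace (B \<mu>) (Y \<mu>)"
    and "Y \<tau> = vecs (B \<tau>)" and HS: "mixed_R_HS (B \<tau>) W F"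
  shows "mixed_C_HS (PiE I B) (slicewise I B Y) (\<lambda>n. slicewise I B (Y(\<tau> := cplx (W n))))
    (\<lambda>p. slicewise I B (Y(\<tau> := F p))) (\<lambda>q. slicewise I B (Y(\<tau> := conj_set (F q))))"
  unfolding mixed_C_HS_def
proof (intro conjI allI)
  have "asc_filt (is_subspace (B \<tau>)) (vecs (B \<tau>)) W" and "desc_filt (is_subspace (B \<tau>)) (vecs (B \<tau>)) F"
    and "hodge_split (cplx (W n)) (cplx (W (n - 1))) F (\<lambda>q. conj_set (F q)) n" for n
    using HS unfolding mixed_R_HS_def by blast+
  then show "asc_filt (is_subspace (PiE I B)) (slicewise I B Y) (\<lambda>n. slicewise I B (Y(\<tau> := cplx (W n))))"
    and "desc_filt (is_subspace (PiE I B)) (slicewise I B Y) (\<lambda>p. slicewise I B (Y(\<tau> := F p)))"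
    and "desc_filt (is_subspace (PiE I B)) (slicewise I B Y) (\<lambda>q. slicewise I B (Y(\<tau> := conj_set (F q))))"
    and "hodge_split (slicewise I B (Y(\<tau> := cplx (W n)))) (slicewise I B (Y(\<tau> := cplx (W (n - 1)))))
       (\<lambda>p. slicewise I B (Y(\<tau> := F p))) (\<lambda>q. slicewise I B (Y(\<tau> := conj_set (F q)))) n" for n
    using assms(1-5) mixed_R_HS_subspaces[OF HS]
    by (auto intro!: asc_filt_slicewise_upd asc_filt_cplx desc_filt_slicewise_upd desc_filt_conj_set
      hodge_split_slicewise_upd)
  show "finite (PiE I B)"
    using assms(1,2) by (simp add: finite_PiE)
  show "is_subspace (PiE I B) (slicewise I B Y)"
    using assms(4) by (rule is_subspace_slicewise)
qed

lemma mixed_R_HS_tensor: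
  fixes W :: "'i \<Rightarrow> int \<Rightarrow> ('b \<Rightarrow> real) set" and F :: "'i \<Rightarrow> int \<Rightarrow> ('b \<Rightarrow> complex) set"
  assumes "finite I" and "\<forall>\<nu>\<in>I. finite (B \<nu>)" and "\<tau> \<in> I" and HS: "mixed_R_HS (B \<tau>) (W \<tau>) (F \<tau>)"
  shows "mixed_R_HS (PiE I B) (tensor_W I B W \<tau>) (tensor_F I B F \<tau>)"
proof -
  have W: "tensor_W I B W \<tau> n = slicewise I B ((\<lambda>\<mu>. vecs (B \<mu>))(\<tau> := W \<tau> n))" for n
    by (rule tensor_W_eq_slicewise[where W = W and \<tau> = \<tau>, OF assms(1,2) mixed_R_HS_subspaces(1)[OF HS]])
  have F: "tensor_F I B F \<tau> p = slicewise I B ((\<lambda>\<mu>. vecs (B \<mu>))(\<tau> := F \<tau> p))" for p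
    by (rule tensor_F_eq_slicewise[where F = F and \<tau> = \<tau>, OF assms(1,2) mixed_R_HS_subspaces(3)[OF HS]])
  have "mixed_C_HS (PiE I B) (slicewise I B (\<lambda>\<mu>. vecs (B \<mu>)))
    (\<lambda>n. slicewise I B ((\<lambda>\<mu>. vecs (B \<mu>))(\<tau> := cplx (W \<tau> n))))
    (\<lambda>p. slicewise I B ((\<lambda>\<mu>. vecs (B \<mu>))(\<tau> := F \<tau> p)))
    (\<lambda>q. slicewise I B ((\<lambda>\<mu>. vecs (B \<mu>))(\<tau> := conj_set (F \<tau> q))))"
    using assms(1-3) HS is_subspace_vecs by (intro mixed_C_HS_slicewise_upd) auto
  moreover have "asc_filt (is_subspace (PiE I B)) (vecs (PiE I B)) (tensor_W I B W \<tau>)"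
    using asc_filt_slicewise_upd[OF assms(3), of B "\<lambda>\<mu>. vecs (B \<mu>)" "W \<tau>"] HS is_subspace_vecs
    unfolding mixed_R_HS_def W slicewise_vecs by auto
  ultimately show ?thesis
    using assms(1,2)
    unfolding mixed_R_HS_def mixed_C_HS_def W F cplx_slicewise_upd conj_set_slicewise_upd slicewise_vecs
    by (auto simp: finite_PiE)
qed

lemma tensor_filtration_eq_slicewise:
  fixes W :: "'i \<Rightarrow> int \<Rightarrow> ('b \<Rightarrow> real) set" and F :: "'i \<Rightarrow> int \<Rightarrow> ('b \<Rightarrow> complex) set"
  assumes "finite I" and "\<forall>\<nu>\<in>I. finite (B \<nu>)" and HS: "mixed_R_HS (B \<nu>) (W \<nu>) (F \<nu>)"
    and "U \<in> range (\<lambda>n. cplx (tensor_W I B W \<nu> n)) \<union> range (tensor_F I B F \<nu>)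
      \<union> range (\<lambda>m. conj_set (tensor_F I B F \<nu> m))"
  obtains A where "is_subspace (B \<nu>) A" and "U = slicewise I B ((\<lambda>\<mu>. vecs (B \<mu>))(\<nu> := A))"
proof -
  note W_eq = tensor_W_eq_slicewise[where W = W and \<tau> = \<nu>, OF assms(1,2) mixed_R_HS_subspaces(1)[OF HS]]
  note F_eq = tensor_F_eq_slicewise[where F = F and \<tau> = \<nu>, OF assms(1,2) mixed_R_HS_subspaces(3)[OF HS]]
  from assms(4) consider (W) n where "U = cplx (tensor_W I B W \<nu> n)" | (F) p where "U = tensor_F I B F \<nu> p"
    | (conj_F) p where "U = conj_set (tensor_F I B F \<nu> p)"
    by blast
  then show thesis
  proof cases
    case W
    then show ?thesis
      using that[OF mixed_R_HS_subspaces(2)[OF HS]] by (simp add: W_eq cplx_slicewise_upd)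
  next
    case F
    then show ?thesis
      using that[OF mixed_R_HS_subspaces(3)[OF HS]] by (simp add: F_eq)
  next
    case conj_F
    then show ?thesis
      using that[OF mixed_R_HS_subspaces(4)[OF HS]] by (simp add: F_eq conj_set_slicewise_upd)
  qed
qed

lemma mixed_C_HS_tensor_restrict:
  fixes W :: "'i \<Rightarrow> int \<Rightarrow> ('b \<Rightarrow> real) set" and F :: "'i \<Rightarrow> int \<Rightarrow> ('b \<Rightarrow> complex) set"
  assumes "finite I" and "\<forall>\<nu>\<in>I. finite (B \<nu>)" and "\<tau> \<in> I" and "\<nu> \<in> I" and "\<tau> \<noteq> \<nu>"
    and HS: "mixed_R_HS (B \<tau>) (W \<tau>) (F \<tau>)" and A: "is_subspace (B \<nu>) A"
  defines "U \<equiv> slicewise I B ((\<lambda>\<mu>. vecs (B \<mu>))(\<nu> := A))"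
  shows "mixed_C_HS (PiE I B) U (\<lambda>k. cplx (tensor_W I B W \<tau> k) \<inter> U) (\<lambda>p. tensor_F I B F \<tau> p \<inter> U)
    (\<lambda>q. conj_set (tensor_F I B F \<tau> q) \<inter> U)"
proof -
  note W_eq = tensor_W_eq_slicewise[where W = W and \<tau> = \<tau>, OF assms(1,2) mixed_R_HS_subspaces(1)[OF HS]]
  note F_eq = tensor_F_eq_slicewise[where F = F and \<tau> = \<tau>, OF assms(1,2) mixed_R_HS_subspaces(3)[OF HS]]
  define Y where "Y = (\<lambda>\<mu>. vecs (B \<mu>) :: ('b \<Rightarrow> complex) set)(\<nu> := A)"
  have restrict: "slicewise I B ((\<lambda>\<mu>. vecs (B \<mu>))(\<tau> := S)) \<inter> U = slicewise I B (Y(\<tau> := S))"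
    if "is_subspace (B \<tau>) S" for S
    unfolding U_def Y_def using that A assms(5) by (intro slicewise_upd_Int) (auto simp: is_subspace_def)
  have "(\<lambda>k. cplx (tensor_W I B W \<tau> k) \<inter> U) = (\<lambda>k. slicewise I B (Y(\<tau> := cplx (W \<tau> k))))"
    and "(\<lambda>p. tensor_F I B F \<tau> p \<inter> U) = (\<lambda>p. slicewise I B (Y(\<tau> := F \<tau> p)))"
    and "(\<lambda>q. conj_set (tensor_F I B F \<tau> q) \<inter> U) = (\<lambda>q. slicewise I B (Y(\<tau> := conj_set (F \<tau> q))))"
    by (simp_all add: W_eq F_eq cplx_slicewise_upd conj_set_slicewise_upd restrict mixed_R_HS_subspaces[OF HS])
  moreover have "U = slicewise I B Y"
    by (simp add: U_def Y_def)
  moreover have "mixed_C_HS (PiE I B) (slicewise I B Y) (\<lambda>n. slicewise I B (Y(\<tau> := cplx (W \<tau> n))))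
    (\<lambda>p. slicewise I B (Y(\<tau> := F \<tau> p))) (\<lambda>q. slicewise I B (Y(\<tau> := conj_set (F \<tau> q))))"
    using assms(1-5) HS A is_subspace_vecs unfolding Y_def by (intro mixed_C_HS_slicewise_upd) auto
  ultimately show ?thesis
    by simp
qed

theorem proposition6p2:
  fixes I :: "'i set" and B :: "'i \<Rightarrow> 'b set"
    and W :: "'i \<Rightarrow> int \<Rightarrow> ('b \<Rightarrow> real) set" and F :: "'i \<Rightarrow> int \<Rightarrow> ('b \<Rightarrow> complex) set"
  assumes "finite I"
    and "\<forall>\<tau>\<in>I. mixed_R_HS (B \<tau>) (W \<tau>) (F \<tau>)"
  shows "MHS_box I (PiE I B) (tensor_W I B W) (tensor_F I B F)"
proof -
  have finB: "\<forall>\<nu>\<in>I. finite (B \<nu>)"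
    using assms(2) unfolding mixed_R_HS_def by blast
  show ?thesis
    unfolding MHS_box_def
  proof (intro conjI ballI impI)
    show "finite (PiE I B)"
      using assms(1) finB by (simp add: finite_PiE)
    show "mixed_R_HS (PiE I B) (tensor_W I B W \<tau>) (tensor_F I B F \<tau>)" if "\<tau> \<in> I" for \<tau>
      using that assms by (intro mixed_R_HS_tensor[OF assms(1) finB]) auto
  next
    fix \<tau> \<nu> U
    assume "\<tau> \<in> I" "\<nu> \<in> I" "\<tau> \<noteq> \<nu>" and "U \<in> range (\<lambda>n. cplx (tensor_W I B W \<nu> n))
      \<union> range (tensor_F I B F \<nu>) \<union> range (\<lambda>m. conj_set (tensor_F I B F \<nu> m))"
    moreover have "mixed_R_HS (B \<nu>) (W \<nu>) (F \<nu>)"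
      using assms(2) \<open>\<nu> \<in> I\<close> by blast
    ultimately obtain A where "is_subspace (B \<nu>) A" and "U = slicewise I B ((\<lambda>\<mu>. vecs (B \<mu>))(\<nu> := A))"
      using tensor_filtration_eq_slicewise[OF assms(1) finB] by metis
    then show "mixed_C_HS (PiE I B) U (\<lambda>k. cplx (tensor_W I B W \<tau> k) \<inter> U) (\<lambda>p. tensor_F I B F \<tau> p \<inter> U)
        (\<lambda>q. conj_set (tensor_F I B F \<tau> q) \<inter> U)"
      using \<open>\<tau> \<in> I\<close> \<open>\<nu> \<in> I\<close> \<open>\<tau> \<noteq> \<nu>\<close> assms(2)
      by (simp add: mixed_C_HS_tensor_restrict[OF assms(1) finB])
  qed
qed

end
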